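(* Let $T$ be a finite rooted tree in which every inner node has at least two children, with node set $V$ and leaf set $L$. Let $S\subseteq V\setminus L$ and let $(\pi,\sigma)$ be a pair of injective maps $S\to L$ which identifies $S$ and has unique request. Then for each $a\in\pi(S)$, the node $\pi^{-1}(a)$ is the least ancestor of $a$ which belongs to $S$.
   Context: Every node is its own ancestor and descendant. A pair $(\pi,\sigma)$ of injective maps from $S\subseteq V\setminus L$ to $L$ identifies $S$ if for each $s\in S$, $s$ is the least common ancestor of $\pi(s)$ and $\sigma(s)$. For $s\in S$, a node $x$ is $s$-requested in $(\pi,\sigma)$ if $x$ lies on the path of $T$ from $\pi(s)$ to $\sigma(s)$. The pair has unique request if every node of $T$ is $s$-requested for at most one $s\in S$. *)

theory Defs
  imports Main
begin

definition rooted_tree :: "'a set \<Rightarrow> 'a \<Rightarrow> ('a \<Rightarrow> 'a) \<Rightarrow> bool" where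
  "rooted_tree V r par \<longleftrightarrow> finite V \<and> r \<in> V \<and> par r = r \<and> (\<forall>v\<in>V. par v \<in> V)
     \<and> (\<forall>v\<in>V. \<exists>n. (par ^^ n) v = r)"

text \<open>u is an ancestor of v (every node is its own ancestor).\<close>
definition anc :: "('a \<Rightarrow> 'a) \<Rightarrow> 'a \<Rightarrow> 'a \<Rightarrow> bool" where
  "anc par u v \<longleftrightarrow> (\<exists>n. (par ^^ n) v = u)"

definition children :: "'a set \<Rightarrow> 'a \<Rightarrow> ('a \<Rightarrow> 'a) \<Rightarrow> 'a \<Rightarrow> 'a set" where
  "children V r par u = {w \<in> V. w \<noteq> r \<and> par w = u}"

definition leaves :: "'a set \<Rightarrow> 'a \<Rightarrow> ('a \<Rightarrow> 'a) \<Rightarrow> 'a set" where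
  "leaves V r par = {v \<in> V. children V r par v = {}}"

definition full_tree :: "'a set \<Rightarrow> 'a \<Rightarrow> ('a \<Rightarrow> 'a) \<Rightarrow> bool" where
  "full_tree V r par \<longleftrightarrow> rooted_tree V r par \<and>
     (\<forall>v \<in> V - leaves V r par. card (children V r par v) \<ge> 2)"

definition is_lca :: "('a \<Rightarrow> 'a) \<Rightarrow> 'a \<Rightarrow> 'a \<Rightarrow> 'a \<Rightarrow> bool" where
  "is_lca par z x y \<longleftrightarrow> anc par z x \<and> anc par z y \<and>
     (\<forall>w. anc par w x \<and> anc par w y \<longrightarrow> anc par w z)"

text \<open>Nodes on the tree path from x to y: ancestors of x or y that are
  descendants of every common ancestor of x and y (i.e. below the lca).\<close>
definition path_nodes :: "'a set \<Rightarrow> ('a \<Rightarrow> 'a) \<Rightarrow> 'a \<Rightarrow> 'a \<Rightarrow> 'a set" where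
  "path_nodes V par x y = {z \<in> V. (anc par z x \<or> anc par z y) \<and>
     (\<forall>w. anc par w x \<and> anc par w y \<longrightarrow> anc par w z)}"

definition identifies :: "('a \<Rightarrow> 'a) \<Rightarrow> 'a set \<Rightarrow> ('a \<Rightarrow> 'a) \<Rightarrow> ('a \<Rightarrow> 'a) \<Rightarrow> bool" where
  "identifies par S \<pi> \<sigma> \<longleftrightarrow> (\<forall>s\<in>S. is_lca par s (\<pi> s) (\<sigma> s))"

definition requested :: "'a set \<Rightarrow> ('a \<Rightarrow> 'a) \<Rightarrow> ('a \<Rightarrow> 'a) \<Rightarrow> ('a \<Rightarrow> 'a) \<Rightarrow> 'a \<Rightarrow> 'a \<Rightarrow> bool" where
  "requested V par \<pi> \<sigma> s x \<longleftrightarrow> x \<in> path_nodes V par (\<pi> s) (\<sigma> s)"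

definition unique_request :: "'a set \<Rightarrow> ('a \<Rightarrow> 'a) \<Rightarrow> 'a set \<Rightarrow> ('a \<Rightarrow> 'a) \<Rightarrow> ('a \<Rightarrow> 'a) \<Rightarrow> bool" where
  "unique_request V par S \<pi> \<sigma> \<longleftrightarrow>
     (\<forall>x\<in>V. \<forall>s1\<in>S. \<forall>s2\<in>S. requested V par \<pi> \<sigma> s1 x \<and> requested V par \<pi> \<sigma> s2 x \<longrightarrow> s1 = s2)"

definition least_anc_in :: "('a \<Rightarrow> 'a) \<Rightarrow> 'a set \<Rightarrow> 'a \<Rightarrow> 'a \<Rightarrow> bool" where
  "least_anc_in par S a s \<longleftrightarrow> s \<in> S \<and> anc par s a \<and> (\<forall>s'\<in>S. anc par s' a \<longrightarrow> anc par s' s)"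

end

theory Submission
  imports Defs
begin

text \<open>Let \<open>s' \<in> S\<close> be an ancestor of \<open>\<pi> s\<close>. Ancestors of a node form a chain, so \<open>s'\<close> is an
  ancestor or a descendant of \<open>s\<close>. In the second case \<open>s'\<close> lies on the path from \<open>\<pi> s\<close> up to
  its lca \<open>s\<close> with \<open>\<sigma> s\<close>, so \<open>s'\<close> is \<open>s\<close>-requested; being the lca of its own pair, it is also
  \<open>s'\<close>-requested. Unique request forces \<open>s' = s\<close>.\<close>

lemma anc_refl: "anc par u u"
  unfolding anc_def by (metis funpow_0)

lemma anc_trans: "anc par u v \<Longrightarrow> anc par v w \<Longrightarrow> anc par u w"
  unfolding anc_def by (metis funpow_add comp_apply)

lemma anc_linear:
  assumes "anc par u a" and "anc par v a"
  shows "anc par u v \<or> anc par v u"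
proof -
  obtain n m where n: "(par ^^ n) a = u" and m: "(par ^^ m) a = v"
    using assms unfolding anc_def by blast
  show ?thesis
  proof (cases "n \<le> m")
    case True
    then have "(par ^^ (m - n)) u = v"
      using n m by (metis funpow_add comp_apply le_add_diff_inverse2)
    then show ?thesis unfolding anc_def by blast
  next
    case False
    then have "(par ^^ (n - m)) v = u"
      using n m by (metis funpow_add comp_apply le_add_diff_inverse2 nat_le_linear)
    then show ?thesis unfolding anc_def by blast
  qed
qed

lemma in_path_nodesI:
  assumes "is_lca par z x y" and "u \<in> V" and "anc par z u" and "anc par u x"
  shows "u \<in> path_nodes V par x y"
proof -
  have "anc par w u" if "anc par w x" and "anc par w y" for w
  proof -
    have "anc par w z" using assms(1) that unfolding is_lca_def by blast
    then show ?thesis using assms(3) by (rule anc_trans)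
  qed
  then show ?thesis using assms(2,4) unfolding path_nodes_def by simp
qed

lemma unique_request_anc_eq:
  assumes "S \<subseteq> V" and "identifies par S \<pi> \<sigma>" and "unique_request V par S \<pi> \<sigma>"
    and "s \<in> S" and "t \<in> S" and "anc par s t" and "anc par t (\<pi> s)"
  shows "t = s"
proof -
  have lca_s: "is_lca par s (\<pi> s) (\<sigma> s)" and lca_t: "is_lca par t (\<pi> t) (\<sigma> t)"
    using assms(2,4,5) unfolding identifies_def by blast+
  have t_V: "t \<in> V" using assms(1,5) by blast
  have "requested V par \<pi> \<sigma> s t"
    unfolding requested_def using in_path_nodesI[OF lca_s t_V assms(6,7)] .
  moreover have "requested V par \<pi> \<sigma> t t"
  proof -
    have "anc par t (\<pi> t)" using lca_t unfolding is_lca_def by simp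
    then show ?thesis unfolding requested_def by (rule in_path_nodesI[OF lca_t t_V anc_refl])
  qed
  ultimately show ?thesis
    using assms(3,4,5) t_V unfolding unique_request_def by blast
qed

lemma least_anc_in_identified:
  assumes "S \<subseteq> V" and "identifies par S \<pi> \<sigma>" and "unique_request V par S \<pi> \<sigma>"
    and "s \<in> S"
  shows "least_anc_in par S (\<pi> s) s"
proof -
  have s_anc: "anc par s (\<pi> s)"
    using assms(2,4) unfolding identifies_def is_lca_def by blast
  have "anc par t s" if "t \<in> S" and t_anc: "anc par t (\<pi> s)" for t
    using anc_linear[OF t_anc s_anc]
  proof
    assume "anc par s t"
    with assms that have "t = s" by (intro unique_request_anc_eq)
    then show ?thesis by (simp add: anc_refl)
  qed
  with assms(4) s_anc show ?thesis unfolding least_anc_in_def by blast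
qed

theorem lemma3p3:
  fixes V :: "'a set" and r :: 'a and par :: "'a \<Rightarrow> 'a"
    and S :: "'a set" and \<pi> \<sigma> :: "'a \<Rightarrow> 'a"
  assumes "full_tree V r par"
    and "S \<subseteq> V - leaves V r par"
    and "inj_on \<pi> S" and "\<pi> ` S \<subseteq> leaves V r par"
    and "inj_on \<sigma> S" and "\<sigma> ` S \<subseteq> leaves V r par"
    and "identifies par S \<pi> \<sigma>"
    and "unique_request V par S \<pi> \<sigma>"
  shows "\<forall>a \<in> \<pi> ` S. least_anc_in par S a (the_inv_into S \<pi> a)"
proof
  fix a assume "a \<in> \<pi> ` S"
  then obtain s where s: "s \<in> S" and a: "a = \<pi> s" by blast
  have "S \<subseteq> V" using assms(2) by blast
  then have "least_anc_in par S (\<pi> s) s"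
    using assms(7,8) s by (rule least_anc_in_identified)
  moreover have "the_inv_into S \<pi> a = s"
    using a s assms(3) by (simp add: the_inv_into_f_f)
  ultimately show "least_anc_in par S a (the_inv_into S \<pi> a)"
    using a by simp
qed

end
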